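(* For all $n\ge1$, $$w(\bar D_{2n})=\frac{2}{4^n\,n!},\qquad w(\bar D_{2n+1})=\frac1{\sqrt\pi}\cdot\frac1{2^{n-1}(2n+1)!!}.$$ In particular $w(\bar D_k)\neq0$ for all $k\ge2$.
   Context: $\mathcal A$ is the free associative $\mathbb R$-algebra of noncommutative polynomials in two symbols $N$ (degree 1) and $\Delta$ (degree 2). Every $A\in\mathcal A$ homogeneous of degree $\ge1$ is uniquely written $A=\bar AN+\tilde A\Delta$ with $\bar A,\tilde A\in\mathcal A$. The weight $w:\mathcal A\to\mathbb R$ is the algebra homomorphism with $w(I)=1$, $w(N)=2$, $w(\Delta)=-1$. Define $R_{kj},S_{kj}$ ($k,j$ integers): $R_{00}=I$, $S_{00}=0$, $R_{kj}=S_{kj}=0$ if $k<0$ or $j<0$, otherwise $R_{kj}=-(N^2+\Delta)R_{k-1,j}+NS_{k-1,j}$, $S_{kj}=\Delta NR_{k-1,j}-\Delta S_{k-1,j}+NR_{k-1,j-1}$. Let $\{a,b\}=\frac{\Gamma(a+b+\frac12)}{(a+b)!\Gamma(a+\frac12)}$, $Z_{n+1}=\sum_{j=0}^n\{n+1,j-1\}R_{n+j,j}$, $\alpha_n=\sum_{j=0}^{n+1}\{n,j\}S_{n+j,j}$. The heat content operators are $D_1=\frac2{\sqrt\pi}I$ and for $n\ge1$: $D_{2n}=\frac1{\sqrt\pi}\sum_{i=1}^n\frac{\Gamma(i+\frac12)\Gamma(n-i+\frac12)}{n!}D_{2i-1}\alpha_{n-i}$, $D_{2n+1}=\frac1{\sqrt\pi}Z_{n+1}+\frac1{\sqrt\pi}\sum_{i=1}^n\frac{i!\Gamma(n-i+\frac12)}{\Gamma(n+\frac32)}D_{2i}\alpha_{n-i}$.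 $D_k$ is homogeneous of degree $k-1$. *)

theory Defs
  imports "HOL-Analysis.Analysis"
begin

text \<open>The free associative real algebra on two letters N (degree 1) and Delta (degree 2).
An element is represented by its coefficient function on words (lists of letters);
all elements arising below have finite support, i.e. are noncommutative polynomials.\<close>

datatype letter = LN | LD

type_synonym ncp = "letter list \<Rightarrow> real"

definition nc_zero :: ncp where "nc_zero = (\<lambda>u. 0)"
definition nc_one :: ncp where "nc_one = (\<lambda>u. if u = [] then 1 else 0)"
definition nc_N :: ncp where "nc_N = (\<lambda>u. if u = [LN] then 1 else 0)"
definition nc_D :: ncp where "nc_D = (\<lambda>u. if u = [LD] then 1 else 0)"
definition nc_add :: "ncp \<Rightarrow> ncp \<Rightarrow> ncp" where "nc_add A B = (\<lambda>u. A u + B u)"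
definition nc_smult :: "real \<Rightarrow> ncp \<Rightarrow> ncp" where "nc_smult c A = (\<lambda>u. c * A u)"
definition nc_mult :: "ncp \<Rightarrow> ncp \<Rightarrow> ncp" where
  "nc_mult A B = (\<lambda>u. \<Sum>i\<le>length u. A (take i u) * B (drop i u))"

text \<open>For homogeneous A of degree \<ge> 1, A = bar A * N + tilde A * Delta.\<close>
definition nc_bar :: "ncp \<Rightarrow> ncp" where "nc_bar A = (\<lambda>u. A (u @ [LN]))"
definition nc_tilde :: "ncp \<Rightarrow> ncp" where "nc_tilde A = (\<lambda>u. A (u @ [LD]))"

definition letter_wt :: "letter \<Rightarrow> real" where
  "letter_wt l = (case l of LN \<Rightarrow> 2 | LD \<Rightarrow> -1)"
definition word_wt :: "letter list \<Rightarrow> real" where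
  "word_wt u = prod_list (map letter_wt u)"
definition weight :: "ncp \<Rightarrow> real" where
  "weight A = (\<Sum>u\<in>{u. A u \<noteq> 0}. A u * word_wt u)"

text \<open>R_{kj}, S_{kj} for k, j \<ge> 0 (they vanish for negative indices).\<close>
fun RS :: "nat \<Rightarrow> nat \<Rightarrow> ncp \<times> ncp" where
  "RS 0 j = (if j = 0 then nc_one else nc_zero, nc_zero)"
| "RS (Suc k) j =
     (let r = fst (RS k j); s = snd (RS k j);
          r' = (if j = 0 then nc_zero else fst (RS k (j - 1)))
      in (nc_add (nc_smult (-1) (nc_mult (nc_add (nc_mult nc_N nc_N) nc_D) r)) (nc_mult nc_N s),
          nc_add (nc_add (nc_mult (nc_mult nc_D nc_N) r) (nc_smult (-1) (nc_mult nc_D s)))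
                 (nc_mult nc_N r')))"

definition R :: "nat \<Rightarrow> nat \<Rightarrow> ncp" where "R k j = fst (RS k j)"
definition S :: "nat \<Rightarrow> nat \<Rightarrow> ncp" where "S k j = snd (RS k j)"

text \<open>{a,b} = Gamma(a+b+1/2) / ((a+b)! Gamma(a+1/2)), used only with a+b \<ge> 0.\<close>
definition brace :: "int \<Rightarrow> int \<Rightarrow> real" where
  "brace a b = Gamma (of_int (a + b) + 1/2) / (fact (nat (a + b)) * Gamma (of_int a + 1/2))"

text \<open>Zsucc n is Z_{n+1} = sum_{j=0}^n {n+1, j-1} R_{n+j,j}.\<close>
definition Zsucc :: "nat \<Rightarrow> ncp" where
  "Zsucc n = (\<lambda>u. \<Sum>j=0..n. brace (int n + 1) (int j - 1) * R (n + j) j u)"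

definition alpha :: "nat \<Rightarrow> ncp" where
  "alpha n = (\<lambda>u. \<Sum>j=0..n+1. brace (int n) (int j) * S (n + j) j u)"

text \<open>Heat content operators D_k, k \<ge> 1 (D_0 is unused and set to 0).\<close>
function Dop :: "nat \<Rightarrow> ncp" where
  "Dop k =
    (if k = 0 then nc_zero
     else if k = 1 then nc_smult (2 / sqrt pi) nc_one
     else if even k then
       (let n = k div 2 in
        (\<lambda>u. \<Sum>i=1..n. (1 / sqrt pi) * (Gamma (real i + 1/2) * Gamma (real (n - i) + 1/2) / fact n)
                 * nc_mult (Dop (2 * i - 1)) (alpha (n - i)) u))
     else
       (let n = k div 2 in
        (\<lambda>u. (1 / sqrt pi) * Zsucc n u +
             (\<Sum>i=1..n. (1 / sqrt pi) * (fact i * Gamma (real (n - i) + 1/2) / Gamma (real n + 3/2))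
                 * nc_mult (Dop (2 * i)) (alpha (n - i)) u))))"
  by auto
termination
  by (relation "Wellfounded.measure id") (auto elim!: oddE)

fun dfact :: "nat \<Rightarrow> nat" where
  "dfact 0 = 1"
| "dfact (Suc 0) = 1"
| "dfact (Suc (Suc n)) = Suc (Suc n) * dfact n"

end

theory Submission
  imports Defs
begin

text \<open>The weight \<open>w\<close> is an algebra homomorphism on finitely supported elements, and the map
  \<open>A \<mapsto> w(bar A)\<close> obeys the twisted Leibniz rule \<open>w(bar(A B)) = w(A) w(bar B) + B\<^sub>0 w(bar A)\<close>,
  where \<open>B\<^sub>0\<close> is the constant term. Hence \<open>w\<close> and \<open>w \<circ> bar\<close> of \<open>R\<^sub>k\<^sub>j\<close>, \<open>S\<^sub>k\<^sub>j\<close> satisfy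
  linear recurrences with binomial solutions, and the weights of \<open>\<alpha>\<^sub>m\<close>, \<open>Z\<^sub>n\<^sub>+\<^sub>1\<close> and of their bar
  parts become Gamma-weighted binomial sums. All of these reduce to
  \<open>\<Sum>\<^sub>j (-4)\<^sup>j \<Gamma>(m+j+1/2)/(m+j)! \<cdot> C(m+j,2j)/(2j+1)\<close>, which vanishes for \<open>m \<ge> 1\<close> by a
  Gosper-type telescoping. So \<open>w(\<alpha>\<^sub>m) = [m = 0]\<close> and \<open>w(Z\<^sub>n\<^sub>+\<^sub>1) = 2[n = 0]\<close>, and only one term
  of each recursion for \<open>D\<^sub>k\<close> survives: \<open>w(D\<^sub>2\<^sub>n) = 1/n!\<close> and \<open>w(D\<^sub>2\<^sub>n\<^sub>+\<^sub>1) = 1/\<Gamma>(n+3/2)\<close>.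
  In the bar part of the recursion what remains is \<open>\<Sum>\<^sub>m\<^sub><\<^sub>n \<Gamma>(m+1/2) w(bar \<alpha>\<^sub>m)\<close>, a geometric
  sum equal to \<open>2 \<surd>\<pi> / 4\<^sup>n\<close>.\<close>

definition nc_support :: "ncp \<Rightarrow> letter list set" where
  "nc_support A = {u. A u \<noteq> 0}"

definition nc_finite :: "ncp \<Rightarrow> bool" where
  "nc_finite A \<longleftrightarrow> finite (nc_support A)"

lemma word_wt_append: "word_wt (u @ v) = word_wt u * word_wt v"
  by (simp add: word_wt_def)

lemma weight_eq_sum_superset:
  assumes "finite T" "nc_support A \<subseteq> T"
  shows "weight A = (\<Sum>u\<in>T. A u * word_wt u)"
proof -
  have "weight A = (\<Sum>u\<in>nc_support A. A u * word_wt u)"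
    by (simp add: weight_def nc_support_def)
  also have "\<dots> = (\<Sum>u\<in>T. A u * word_wt u)"
    by (rule sum.mono_neutral_left) (use assms in \<open>auto simp: nc_support_def\<close>)
  finally show ?thesis .
qed

lemma nc_support_sum: "nc_support (\<lambda>u. \<Sum>i\<in>I. f i u) \<subseteq> (\<Union>i\<in>I. nc_support (f i))"
  by (auto simp: nc_support_def intro: ccontr dest: sum.not_neutral_contains_not_neutral)

lemma nc_finite_sum:
  assumes "finite I" "\<And>i. i \<in> I \<Longrightarrow> nc_finite (f i)"
  shows "nc_finite (\<lambda>u. \<Sum>i\<in>I. f i u)"
  using assms nc_support_sum[of f I] unfolding nc_finite_def by (meson finite_UN_I finite_subset)

lemma weight_sum:
  assumes "finite I" "\<And>i. i \<in> I \<Longrightarrow> nc_finite (f i)"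
  shows "weight (\<lambda>u. \<Sum>i\<in>I. f i u) = (\<Sum>i\<in>I. weight (f i))"
proof -
  define T where "T = (\<Union>i\<in>I. nc_support (f i))"
  have T: "finite T" using assms unfolding T_def nc_finite_def by auto
  have "weight (\<lambda>u. \<Sum>i\<in>I. f i u) = (\<Sum>u\<in>T. (\<Sum>i\<in>I. f i u) * word_wt u)"
    using weight_eq_sum_superset[OF T] nc_support_sum T_def by blast
  also have "\<dots> = (\<Sum>i\<in>I. \<Sum>u\<in>T. f i u * word_wt u)"
    by (simp add: sum_distrib_right sum.swap[of _ T])
  also have "\<dots> = (\<Sum>i\<in>I. weight (f i))"
    by (rule sum.cong[OF refl], rule weight_eq_sum_superset[symmetric]) (use T in \<open>auto simp: T_def\<close>)
  finally show ?thesis .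
qed

lemma nc_finite_scale: "nc_finite A \<Longrightarrow> nc_finite (\<lambda>u. c * A u)"
  unfolding nc_finite_def nc_support_def by (rule finite_subset[of _ "{u. A u \<noteq> 0}"]) auto

lemma weight_scale: "nc_finite A \<Longrightarrow> weight (\<lambda>u. c * A u) = c * weight A"
  using weight_sum[of "{()}" "\<lambda>_. A"] weight_eq_sum_superset[of "nc_support A" A]
    weight_eq_sum_superset[of "nc_support A" "\<lambda>u. c * A u"]
  by (auto simp: nc_finite_def nc_support_def sum_distrib_left mult.assoc)

lemma nc_finite_lincomb:
  "finite I \<Longrightarrow> (\<And>i. i \<in> I \<Longrightarrow> nc_finite (A i)) \<Longrightarrow> nc_finite (\<lambda>u. \<Sum>i\<in>I. c i * A i u)"
  by (rule nc_finite_sum) (auto intro: nc_finite_scale)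

lemma weight_lincomb:
  "finite I \<Longrightarrow> (\<And>i. i \<in> I \<Longrightarrow> nc_finite (A i)) \<Longrightarrow>
   weight (\<lambda>u. \<Sum>i\<in>I. c i * A i u) = (\<Sum>i\<in>I. c i * weight (A i))"
  by (subst weight_sum) (auto intro: nc_finite_scale simp: weight_scale)

lemma nc_finite_add: "nc_finite A \<Longrightarrow> nc_finite B \<Longrightarrow> nc_finite (nc_add A B)"
  using nc_finite_sum[of "{True, False}" "\<lambda>b. if b then A else B"]
  by (simp add: nc_add_def)

lemma weight_add: "nc_finite A \<Longrightarrow> nc_finite B \<Longrightarrow> weight (nc_add A B) = weight A + weight B"
  using weight_sum[of "{True, False}" "\<lambda>b. if b then A else B"]
  by (simp add: nc_add_def)

lemma nc_finite_smult: "nc_finite A \<Longrightarrow> nc_finite (nc_smult c A)"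
  unfolding nc_smult_def by (rule nc_finite_scale)

lemma weight_smult: "nc_finite A \<Longrightarrow> weight (nc_smult c A) = c * weight A"
  unfolding nc_smult_def by (rule weight_scale)

lemma nc_finite_zero: "nc_finite nc_zero"
  by (simp add: nc_finite_def nc_support_def nc_zero_def)

lemma nc_finite_one: "nc_finite nc_one"
  unfolding nc_finite_def nc_support_def nc_one_def by (rule finite_subset[of _ "{[]}"]) auto

lemma nc_finite_N: "nc_finite nc_N"
  unfolding nc_finite_def nc_support_def nc_N_def by (rule finite_subset[of _ "{[LN]}"]) auto

lemma nc_finite_D: "nc_finite nc_D"
  unfolding nc_finite_def nc_support_def nc_D_def by (rule finite_subset[of _ "{[LD]}"]) auto

lemma weight_zero: "weight nc_zero = 0"
  by (simp add: weight_def nc_zero_def)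

lemma weight_one: "weight nc_one = 1"
  by (subst weight_eq_sum_superset[of "{[]}"]) (auto simp: nc_support_def nc_one_def word_wt_def)

lemma weight_N: "weight nc_N = 2"
  by (subst weight_eq_sum_superset[of "{[LN]}"])
    (auto simp: nc_support_def nc_N_def word_wt_def letter_wt_def)

lemma weight_D: "weight nc_D = -1"
  by (subst weight_eq_sum_superset[of "{[LD]}"])
    (auto simp: nc_support_def nc_D_def word_wt_def letter_wt_def)

lemma nc_mult_eq_sum_factorizations:
  "nc_mult A B u =
     (\<Sum>p\<in>{p \<in> nc_support A \<times> nc_support B. fst p @ snd p = u}. A (fst p) * B (snd p))"
proof -
  define g where "g = (\<lambda>i. (take i u, drop i u))"
  have inj: "inj_on g {..length u}"
    by (rule inj_onI) (metis g_def atMost_iff fst_conv length_take min.absorb2)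
  have "nc_mult A B u = (\<Sum>p\<in>g ` {..length u}. A (fst p) * B (snd p))"
    by (simp add: nc_mult_def sum.reindex[OF inj]) (simp add: g_def)
  also have "\<dots> = (\<Sum>p\<in>{p \<in> nc_support A \<times> nc_support B. fst p @ snd p = u}. A (fst p) * B (snd p))"
  proof (rule sum.mono_neutral_right)
    show "{p \<in> nc_support A \<times> nc_support B. fst p @ snd p = u} \<subseteq> g ` {..length u}"
    proof
      fix p assume "p \<in> {p \<in> nc_support A \<times> nc_support B. fst p @ snd p = u}"
      then have "p = g (length (fst p))" "length (fst p) \<le> length u"
        by (auto simp: g_def prod_eq_iff)
      then show "p \<in> g ` {..length u}" by auto
    qed
  qed (auto simp: g_def nc_support_def)
  finally show ?thesis .
qed

lemma nc_support_mult:
  "nc_support (nc_mult A B) \<subseteq> (\<lambda>p. fst p @ snd p) ` (nc_support A \<times> nc_support B)"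
proof
  fix u assume "u \<in> nc_support (nc_mult A B)"
  then have "nc_mult A B u \<noteq> 0" by (simp add: nc_support_def)
  then obtain p where "p \<in> {p \<in> nc_support A \<times> nc_support B. fst p @ snd p = u}"
    unfolding nc_mult_eq_sum_factorizations by (meson sum.neutral)
  then show "u \<in> (\<lambda>p. fst p @ snd p) ` (nc_support A \<times> nc_support B)" by force
qed

lemma nc_finite_mult: "nc_finite A \<Longrightarrow> nc_finite B \<Longrightarrow> nc_finite (nc_mult A B)"
  using nc_support_mult unfolding nc_finite_def by (meson finite_SigmaI finite_imageI finite_subset)

lemma weight_mult:
  assumes "nc_finite A" "nc_finite B"
  shows "weight (nc_mult A B) = weight A * weight B"
proof -
  define P where "P = nc_support A \<times> nc_support B"
  define h where "h = (\<lambda>p::letter list \<times> letter list. fst p @ snd p)"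
  have P: "finite P" using assms by (simp add: P_def nc_finite_def)
  have "weight (nc_mult A B) = (\<Sum>u\<in>h ` P. nc_mult A B u * word_wt u)"
    using P nc_support_mult unfolding P_def h_def by (intro weight_eq_sum_superset) auto
  also have "\<dots> = (\<Sum>u\<in>h ` P. \<Sum>p\<in>{p\<in>P. h p = u}. A (fst p) * B (snd p) * word_wt (h p))"
    by (rule sum.cong[OF refl])
      (simp add: nc_mult_eq_sum_factorizations P_def h_def sum_distrib_right)
  also have "\<dots> = (\<Sum>p\<in>P. A (fst p) * B (snd p) * word_wt (h p))"
    by (rule sum.image_gen[OF P, symmetric])
  also have "\<dots> = (\<Sum>p\<in>P. (A (fst p) * word_wt (fst p)) * (B (snd p) * word_wt (snd p)))"
    by (simp add: h_def word_wt_append mult_ac)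
  also have "\<dots> = (\<Sum>a\<in>nc_support A. A a * word_wt a) * (\<Sum>b\<in>nc_support B. B b * word_wt b)"
    by (simp add: P_def sum_product sum.cartesian_product case_prod_beta)
  also have "\<dots> = weight A * weight B"
    using assms by (simp add: weight_def nc_support_def)
  finally show ?thesis .
qed

text \<open>The coefficient \<open>B []\<close> is the constant term of \<open>B\<close>.\<close>

lemma nc_bar_mult: "nc_bar (nc_mult A B) = (\<lambda>u. nc_mult A (nc_bar B) u + B [] * nc_bar A u)"
proof
  fix u
  have "nc_bar (nc_mult A B) u =
      (\<Sum>i\<le>length u. A (take i (u @ [LN])) * B (drop i (u @ [LN]))) + A (u @ [LN]) * B []"
    by (simp add: nc_bar_def nc_mult_def)
  also have "(\<Sum>i\<le>length u. A (take i (u @ [LN])) * B (drop i (u @ [LN]))) =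
      (\<Sum>i\<le>length u. A (take i u) * B (drop i u @ [LN]))"
    by (rule sum.cong) auto
  finally show "nc_bar (nc_mult A B) u = nc_mult A (nc_bar B) u + B [] * nc_bar A u"
    by (simp add: nc_mult_def nc_bar_def)
qed

lemma nc_finite_bar: "nc_finite A \<Longrightarrow> nc_finite (nc_bar A)"
proof -
  assume "nc_finite A"
  then have "finite ((\<lambda>u. u @ [LN]) -` nc_support A)"
    by (intro finite_vimageI) (auto simp: nc_finite_def inj_def)
  moreover have "nc_support (nc_bar A) = (\<lambda>u. u @ [LN]) -` nc_support A"
    by (auto simp: nc_support_def nc_bar_def)
  ultimately show ?thesis by (simp add: nc_finite_def)
qed

lemma weight_bar_mult:
  assumes "nc_finite A" "nc_finite B"
  shows "weight (nc_bar (nc_mult A B)) = weight A * weight (nc_bar B) + B [] * weight (nc_bar A)"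
proof -
  have "nc_bar (nc_mult A B) = nc_add (nc_mult A (nc_bar B)) (\<lambda>u. B [] * nc_bar A u)"
    by (simp add: nc_bar_mult nc_add_def)
  then show ?thesis
    using assms by (simp add: weight_add nc_finite_mult nc_finite_bar nc_finite_scale
        weight_mult weight_scale)
qed

lemma nc_bar_add: "nc_bar (nc_add A B) = nc_add (nc_bar A) (nc_bar B)"
  by (simp add: nc_bar_def nc_add_def)

lemma nc_bar_smult: "nc_bar (nc_smult c A) = nc_smult c (nc_bar A)"
  by (simp add: nc_bar_def nc_smult_def)

lemma nc_bar_lincomb: "nc_bar (\<lambda>u. \<Sum>i\<in>I. c i * A i u) = (\<lambda>u. \<Sum>i\<in>I. c i * nc_bar (A i) u)"
  by (simp add: nc_bar_def)

lemma weight_bar_generators: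
  "weight (nc_bar nc_N) = 1" "weight (nc_bar nc_D) = 0"
  "weight (nc_bar nc_one) = 0" "weight (nc_bar nc_zero) = 0"
proof -
  have "nc_bar nc_N = nc_one" by (auto simp: nc_bar_def nc_one_def nc_N_def)
  moreover have "nc_bar nc_D = nc_zero" "nc_bar nc_one = nc_zero" "nc_bar nc_zero = nc_zero"
    by (auto simp: nc_bar_def nc_zero_def nc_one_def nc_D_def)
  ultimately show "weight (nc_bar nc_N) = 1" "weight (nc_bar nc_D) = 0"
    "weight (nc_bar nc_one) = 0" "weight (nc_bar nc_zero) = 0"
    by (simp_all add: weight_one weight_zero)
qed

lemma nc_constant_terms:
  "nc_zero [] = 0" "nc_one [] = 1" "nc_N [] = 0" "nc_D [] = 0"
  "nc_add A B [] = A [] + B []" "nc_smult c A [] = c * A []" "nc_mult A B [] = A [] * B []"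
  by (simp_all add: nc_N_def nc_D_def nc_one_def nc_zero_def nc_add_def nc_smult_def nc_mult_def)

lemmas nc_finite_closure =
  nc_finite_zero nc_finite_one nc_finite_N nc_finite_D
  nc_finite_add nc_finite_smult nc_finite_mult nc_finite_bar

lemmas weight_homomorphism =
  weight_zero weight_one weight_N weight_D weight_add weight_smult weight_mult

lemma R_0: "R 0 j = (if j = 0 then nc_one else nc_zero)" and S_0: "S 0 j = nc_zero"
  by (simp_all add: R_def S_def)

lemma R_Suc:
  "R (Suc k) j = nc_add (nc_smult (-1) (nc_mult (nc_add (nc_mult nc_N nc_N) nc_D) (R k j)))
                        (nc_mult nc_N (S k j))"
  by (simp add: R_def S_def Let_def)

lemma S_Suc:
  "S (Suc k) j = nc_add (nc_add (nc_mult (nc_mult nc_D nc_N) (R k j)) (nc_smult (-1) (nc_mult nc_D (S k j))))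
                        (nc_mult nc_N (if j = 0 then nc_zero else R k (j - 1)))"
  by (simp add: R_def S_def Let_def)

lemma nc_finite_R_S: "nc_finite (R k j) \<and> nc_finite (S k j)"
  by (induction k arbitrary: j)
    (simp_all add: R_0 S_0 R_Suc S_Suc nc_finite_closure)

lemma nc_finite_R: "nc_finite (R k j)" and nc_finite_S: "nc_finite (S k j)"
  using nc_finite_R_S by blast+

lemma R_Nil: "R k j [] = (if k = 0 \<and> j = 0 then 1 else 0)" and S_Nil: "S k j [] = 0"
  by (cases k; simp add: R_0 S_0 R_Suc S_Suc nc_constant_terms)+

definition wR :: "nat \<Rightarrow> nat \<Rightarrow> real" where
  "wR k j = (-1)^k * 4^j * (real (k choose (2*j)) + 2 * real (k choose (2*j+1)))"

definition wS :: "nat \<Rightarrow> nat \<Rightarrow> real" where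
  "wS k j = (-1)^k * 2 * (4^j * real (k choose (2*j+1)) -
      (if j = 0 then 0 else 4^(j-1) * real (k choose (2*j-1))))"

lemma wR_0: "wR 0 j = (if j = 0 then 1 else 0)"
  by (simp add: wR_def)

lemma wS_0: "wS 0 j = 0"
  by (cases j) (simp_all add: wS_def)

lemma wR_Suc: "wR (Suc k) j = -3 * wR k j + 2 * wS k j"
proof (cases j)
  case (Suc i)
  have "2 * Suc i = Suc (Suc (2*i))" "2 * Suc i + 1 = Suc (Suc (Suc (2*i)))" "2 * Suc i - 1 = Suc (2*i)"
    by simp_all
  then show ?thesis unfolding Suc wR_def wS_def by (simp add: algebra_simps)
qed (simp add: wR_def wS_def algebra_simps)

lemma wS_Suc: "wS (Suc k) j = -2 * wR k j + wS k j + (if j = 0 then 0 else 2 * wR k (j-1))"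
proof (cases j)
  case (Suc i)
  have "2 * Suc i = Suc (Suc (2*i))" "2 * Suc i + 1 = Suc (Suc (Suc (2*i)))" "2 * Suc i - 1 = Suc (2*i)"
    by simp_all
  then show ?thesis unfolding Suc wR_def wS_def by (simp add: algebra_simps)
qed (simp add: wR_def wS_def algebra_simps)

lemma weight_R_S: "weight (R k j) = wR k j \<and> weight (S k j) = wS k j"
  by (induction k arbitrary: j)
    (simp_all add: R_0 S_0 R_Suc S_Suc wR_0 wS_0 wR_Suc wS_Suc nc_finite_R nc_finite_S
      nc_finite_closure weight_homomorphism)

lemma weight_R: "weight (R k j) = wR k j" and weight_S: "weight (S k j) = wS k j"
  using weight_R_S by blast+

text \<open>For \<open>k = 0\<close> the truncated subtraction makes both bar weights vanish, as they should.\<close>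

definition wbarR :: "nat \<Rightarrow> nat \<Rightarrow> real" where
  "wbarR k j = (wR k j - wR (k-1) j) / 2"

definition wbarS :: "nat \<Rightarrow> nat \<Rightarrow> real" where
  "wbarS k j = (wS k j - wS (k-1) j) / 2"

lemma wbarR_Suc: "wbarR (Suc k) j = -3 * wbarR k j - 2 * R k j [] + 2 * wbarS k j"
  by (cases k) (simp_all add: wbarR_def wbarS_def R_Nil wR_Suc wR_0 wS_0 field_simps)

lemma wbarS_Suc:
  "wbarS (Suc k) j = -2 * wbarR k j - R k j [] + wbarS k j +
     (if j = 0 then 0 else 2 * wbarR k (j-1) + R k (j-1) [])"
  by (cases k; cases j) (simp_all add: wbarR_def wbarS_def R_Nil wS_Suc wR_0 wS_0 field_simps)

lemma weight_bar_R_S: "weight (nc_bar (R k j)) = wbarR k j \<and> weight (nc_bar (S k j)) = wbarS k j"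
proof (induction k arbitrary: j)
  case 0
  then show ?case by (simp add: R_0 S_0 wbarR_def wbarS_def wR_0 wS_0 weight_bar_generators)
next
  case (Suc k)
  then show ?case
    by (simp add: R_Suc S_Suc wbarR_Suc wbarS_Suc nc_finite_R nc_finite_S nc_finite_closure
      weight_homomorphism nc_bar_add nc_bar_smult weight_bar_mult weight_bar_generators
      nc_constant_terms weight_R weight_S S_Nil)
qed

lemma weight_bar_R: "weight (nc_bar (R k j)) = wbarR k j"
  and weight_bar_S: "weight (nc_bar (S k j)) = wbarS k j"
  using weight_bar_R_S by blast+

definition gamma_half :: "nat \<Rightarrow> real" where
  "gamma_half n = Gamma (real n + 1/2)"

lemma gamma_half_pos: "gamma_half n > 0"
  by (simp add: gamma_half_def)

lemma gamma_half_0: "gamma_half 0 = sqrt pi"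
  by (simp add: gamma_half_def Gamma_one_half_real)

lemma gamma_half_Suc: "gamma_half (Suc n) = (real n + 1/2) * gamma_half n"
proof -
  have "real n + 1/2 \<notin> \<int>\<^sub>\<le>\<^sub>0"
    using nonpos_Ints_nonpos by fastforce
  then have "Gamma (real n + 1/2 + 1) = (real n + 1/2) * Gamma (real n + 1/2)"
    by (rule Gamma_plus1)
  then show ?thesis by (simp add: gamma_half_def add_ac)
qed

lemma gamma_half_double_fact: "gamma_half (Suc n) * 2^(Suc n) = sqrt pi * real (dfact (2*n+1))"
proof (induction n)
  case (Suc n)
  have "dfact (2 * Suc n + 1) = (2*n+3) * dfact (2*n+1)"
    by (simp add: numeral_eq_Suc)
  moreover have "gamma_half (Suc (Suc n)) * 2^(Suc (Suc n)) =
      (2 * real n + 3) * (gamma_half (Suc n) * 2^(Suc n))"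
    by (simp add: gamma_half_Suc[of "Suc n"] algebra_simps)
  ultimately show ?case unfolding Suc by simp
qed (simp add: gamma_half_Suc gamma_half_0)

definition gamma_half_quot :: "nat \<Rightarrow> real" where
  "gamma_half_quot k = gamma_half k / fact k"

lemma gamma_half_quot_Suc:
  "gamma_half_quot (Suc k) * (2 * real k + 2) = gamma_half_quot k * (2 * real k + 1)"
proof -
  have "gamma_half_quot (Suc k) = gamma_half k * (2 * real k + 1) / (fact k * (2 * real k + 2))"
    by (simp add: gamma_half_quot_def gamma_half_Suc field_simps)
  then show ?thesis by (simp add: gamma_half_quot_def)
qed

lemma binomial_Suc_right_mult: "(n choose Suc k) * Suc k = (n choose k) * (n - k)"
proof (cases n)
  case (Suc m)
  then show ?thesis
    using Suc_times_binomial_eq[of m k] binomial_absorb_comp[of n k] by (simp add: mult_ac)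
qed simp

text \<open>For \<open>m \<ge> 1\<close> the sum over \<open>j\<close> of this term vanishes: it is Gosper-summable, with
  antidifference \<open>-j (2j+1) T(m,j) / (m (2m+1))\<close>.\<close>

definition gosper_term :: "nat \<Rightarrow> nat \<Rightarrow> real" where
  "gosper_term m j = (-4)^j * gamma_half_quot (m+j) * real ((m+j) choose (2*j)) / (2*j+1)"

lemma gosper_term_step:
  "(real m * (2*m+1) - real j * (2*j+1)) * gosper_term m j =
     - (real j + 1) * (2*j+3) * gosper_term m (Suc j)"
proof (cases "j \<le> m")
  case False
  then have "(m+j) choose (2*j) = 0" "Suc (m+j) choose Suc (Suc (2*j)) = 0"
    by simp_all
  then show ?thesis by (simp add: gosper_term_def binomial_eq_0 del: binomial_Suc_Suc)
next
  case True
  define k where "k = m + j"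
  define X where "X = real (k choose (2*j))"
  define Y where "Y = real (Suc k choose Suc (Suc (2*j)))"
  have Y: "Y * ((2*j+1) * (2*j+2)) = (k+1) * (real m - real j) * X"
  proof -
    have "(Suc k choose Suc (Suc (2*j))) * (Suc (2*j) * Suc (Suc (2*j))) =
        Suc k * ((k choose Suc (2*j)) * Suc (2*j))"
      using Suc_times_binomial_eq[of k "Suc (2*j)"] by (metis mult.assoc mult.commute)
    also have "\<dots> = Suc k * (k - 2*j) * (k choose (2*j))"
      using binomial_Suc_right_mult[of k "2*j"] by (metis mult.assoc mult.commute)
    finally have e: "Y * (real (Suc (2*j)) * real (Suc (Suc (2*j)))) = real (Suc k) * real (k - 2*j) * X"
      unfolding X_def Y_def by (metis of_nat_mult)
    have d: "real (k - 2*j) = real m - real j"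
      using True by (simp add: k_def)
    show ?thesis using e unfolding d by (simp add: algebra_simps)
  qed
  have C: "gamma_half_quot (Suc k) * (2 * real k + 2) = gamma_half_quot k * (2 * real k + 1)"
    by (rule gamma_half_quot_Suc)
  have T: "gosper_term m j = (-4)^j * gamma_half_quot k * X / (2*j+1)"
    by (simp add: gosper_term_def k_def X_def)
  have T': "gosper_term m (Suc j) = - 4 * (-4)^j * gamma_half_quot (Suc k) * Y / (2*j+3)"
    by (simp add: gosper_term_def k_def Y_def numeral_eq_Suc del: binomial_Suc_Suc)
  have "- (real j + 1) * (2*j+3) * gosper_term m (Suc j) * (2*j+1) * (2*j+2) =
      4 * (j+1) * (-4)^j * gamma_half_quot (Suc k) * (Y * ((2*j+1) * (2*j+2)))"
    by (simp add: T' field_simps)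
  also have "\<dots> = 2 * (-4)^j * (real m - real j) * X * (j+1) *
      (gamma_half_quot (Suc k) * (2 * real k + 2))"
    by (simp only: Y) (simp add: algebra_simps)
  also have "\<dots> = (real m * (2*m+1) - real j * (2*j+1)) * gosper_term m j * (2*j+1) * (2*j+2)"
    by (simp only: C) (simp add: T k_def field_simps)
  finally show ?thesis by simp
qed

lemma gosper_term_partial_sum:
  "real m * (2*m+1) * (\<Sum>j<J. gosper_term m j) = - real J * (2*J+1) * gosper_term m J"
proof (induction J)
  case (Suc J)
  have "real m * (2*m+1) * (\<Sum>j<Suc J. gosper_term m j) =
      real m * (2*m+1) * (\<Sum>j<J. gosper_term m j) + real m * (2*m+1) * gosper_term m J"
    by (simp add: algebra_simps)
  also have "\<dots> = (real m * (2*m+1) - real J * (2*J+1)) * gosper_term m J"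
    using Suc.IH by (simp add: algebra_simps)
  also have "\<dots> = - (real J + 1) * (2*J+3) * gosper_term m (Suc J)"
    by (rule gosper_term_step)
  finally show ?case by (simp add: algebra_simps)
qed simp

lemma sum_gosper_term_eq_0:
  assumes "m \<ge> 1"
  shows "(\<Sum>j\<le>m. gosper_term m j) = 0"
proof -
  have "gosper_term m (Suc m) = 0"
    by (simp add: gosper_term_def del: binomial_Suc_Suc)
  then have "real m * (2*m+1) * (\<Sum>j<Suc m. gosper_term m j) = 0"
    using gosper_term_partial_sum[of m "Suc m"] by simp
  then show ?thesis
    using assms by (simp add: lessThan_Suc_atMost)
qed

definition sumR :: "nat \<Rightarrow> real" where
  "sumR m = (\<Sum>j\<le>m. gamma_half_quot (m+j) * wR (m+j) j)"

definition sumS :: "nat \<Rightarrow> real" where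
  "sumS m = (\<Sum>j\<le>m+1. gamma_half_quot (m+j) * wS (m+j) j)"

definition sumR_pred :: "nat \<Rightarrow> real" where
  "sumR_pred m = (\<Sum>j\<le>m. gamma_half_quot (m+j) * wR (m+j-1) j)"

definition sumS_pred :: "nat \<Rightarrow> real" where
  "sumS_pred m = (\<Sum>j\<le>m+1. gamma_half_quot (m+j) * wS (m+j-1) j)"

lemma wR_eq_0: "k < 2*j \<Longrightarrow> wR k j = 0"
  by (simp add: wR_def binomial_eq_0)

lemma wS_eq_0: "k + 1 < 2*j \<Longrightarrow> wS k j = 0"
  by (simp add: wS_def binomial_eq_0)

lemma wR_gosper_term:
  assumes "j \<le> m"
  shows "gamma_half_quot (m+j) * wR (m+j) j = (-1)^m * (2*real m+1) * gosper_term m j"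
proof -
  define P where "P = real ((m+j) choose (2*j))"
  define Q where "Q = real ((m+j) choose (2*j+1))"
  have L: "Q * (2*j+1) = P * (real m - real j)"
  proof -
    have "real (((m+j) choose Suc (2*j)) * Suc (2*j)) = real (((m+j) choose (2*j)) * (m + j - 2*j))"
      by (simp only: binomial_Suc_right_mult)
    moreover have "real (m + j - 2*j) = real m - real j"
      using assms by simp
    ultimately show ?thesis unfolding P_def Q_def by (simp add: algebra_simps)
  qed
  have s: "(-1::real)^(m+j) * 4^j = (-1)^m * (-4)^j"
    by (simp add: power_add power_mult_distrib[symmetric])
  have "gamma_half_quot (m+j) * wR (m+j) j = gamma_half_quot (m+j) * ((-1)^(m+j) * 4^j) * (P + 2*Q)"
    by (simp add: wR_def P_def Q_def)
  also have "\<dots> = gamma_half_quot (m+j) * ((-1)^m * (-4)^j) * (P * (2*j+1) + 2*(Q*(2*j+1))) / (2*j+1)"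
    by (simp only: s) (simp add: field_simps)
  also have "\<dots> = (-1)^m * (2*real m+1) * gosper_term m j"
    unfolding L gosper_term_def P_def by (simp add: field_simps)
  finally show ?thesis .
qed

lemma sumR_eq: "sumR m = (if m = 0 then sqrt pi else 0)"
proof (cases "m = 0")
  case True
  then show ?thesis by (simp add: sumR_def wR_0 gamma_half_quot_def gamma_half_0)
next
  case False
  have "sumR m = (-1)^m * (2*real m+1) * (\<Sum>j\<le>m. gosper_term m j)"
    unfolding sumR_def sum_distrib_left by (rule sum.cong) (simp_all add: wR_gosper_term)
  with False show ?thesis by (simp add: sum_gosper_term_eq_0)
qed

text \<open>\<open>wS\<close> is a first difference in \<open>j\<close>, which makes \<open>sumS\<close> telescope onto \<open>gosper_term\<close>.\<close>

definition wS_lead :: "nat \<Rightarrow> nat \<Rightarrow> real" where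
  "wS_lead k j = 2 * (-1)^k * 4^j * real (k choose (2*j+1))"

lemma wS_eq_wS_lead: "wS k j = wS_lead k j - (if j = 0 then 0 else wS_lead k (j-1))"
proof (cases j)
  case (Suc i)
  then have "2*j - 1 = 2*i + 1" by simp
  then show ?thesis using Suc by (simp add: wS_def wS_lead_def algebra_simps)
qed (simp add: wS_def wS_lead_def)

lemma wS_lead_gosper_term:
  assumes "j \<le> m"
  shows "gamma_half_quot (m+j) * wS_lead (m+j) j - gamma_half_quot (Suc (m+j)) * wS_lead (Suc (m+j)) j
    = (-1)^m * (4*real m+1) * gosper_term m j"
proof -
  define k where "k = m + j"
  define P where "P = real (k choose (2*j))"
  define Q where "Q = real (k choose (2*j+1))"
  define T where "T = real (Suc k choose Suc (2*j))"
  define c0 where "c0 = gamma_half_quot k"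
  define c1 where "c1 = gamma_half_quot (Suc k)"
  define s where "s = (-1::real)^(m+j) * 4^j"
  have LQ: "Q * (2*j+1) = P * (real m - real j)"
  proof -
    have e: "real (k choose Suc (2*j)) * real (Suc (2*j)) = real (k choose (2*j)) * real (k - 2*j)"
      by (simp only: of_nat_mult[symmetric] binomial_Suc_right_mult)
    have d: "real (k - 2*j) = real m - real j"
      using assms by (simp add: k_def)
    show ?thesis using e unfolding d P_def Q_def by (simp add: algebra_simps)
  qed
  have LT: "T * (2*j+1) = (real k + 1) * P"
  proof -
    have "real (Suc k * (k choose (2*j))) = real ((Suc k choose Suc (2*j)) * Suc (2*j))"
      by (simp only: Suc_times_binomial_eq)
    then show ?thesis unfolding T_def P_def by (simp add: algebra_simps)
  qed
  have LC: "c1 * (2 * real k + 2) = c0 * (2 * real k + 1)"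
    unfolding c0_def c1_def by (rule gamma_half_quot_Suc)
  have sg: "(-1::real)^m * s = (-4)^j"
    by (simp add: s_def power_add power_mult_distrib[symmetric] mult_ac flip: power2_eq_square)
  have "(gamma_half_quot (m+j) * wS_lead (m+j) j - gamma_half_quot (Suc (m+j)) * wS_lead (Suc (m+j)) j)
      * (2*j+1) = 2 * s * (c0 * (Q * (2*j+1)) + c1 * (T * (2*j+1)))"
    by (simp add: wS_lead_def s_def c0_def c1_def Q_def T_def k_def algebra_simps)
  also have "\<dots> = 2 * s * (c0 * P * (real m - real j) + (c1 * (2 * real k + 2)) * P / 2)"
    unfolding LQ LT by (simp add: algebra_simps)
  also have "\<dots> = s * c0 * P * (4 * real m + 1)"
    unfolding LC by (simp add: k_def algebra_simps)
  also have "\<dots> = (-1)^m * (4*real m+1) * (gosper_term m j * (2*j+1))"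
  proof -
    have "gosper_term m j * (2*j+1) = (-1)^m * s * c0 * P"
      unfolding gosper_term_def sg[symmetric] by (simp add: c0_def P_def k_def)
    moreover have "(-1::real)^m * (-1)^m = 1"
      by (simp flip: power_add)
    ultimately show ?thesis by (simp add: algebra_simps)
  qed
  finally show ?thesis by simp
qed

lemma sumS_eq: "sumS m = (if m = 0 then sqrt pi else 0)"
proof -
  define X where "X j = gamma_half_quot (m+j) * wS_lead (m+j) j" for j
  define Y where "Y j = (if j = 0 then 0 else gamma_half_quot (m+j) * wS_lead (m+j) (j-1))" for j
  have "X (Suc m) = 0"
    by (simp add: X_def wS_lead_def binomial_eq_0)
  then have "(\<Sum>j\<le>Suc m. X j) = (\<Sum>j\<le>m. X j)"
    by simp
  moreover have "(\<Sum>j\<le>Suc m. Y j) = (\<Sum>j\<le>m. Y (Suc j))"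
    by (simp only: sum.atMost_Suc_shift) (simp add: Y_def)
  moreover have "sumS m = (\<Sum>j\<le>Suc m. X j) - (\<Sum>j\<le>Suc m. Y j)"
    by (auto simp: sumS_def wS_eq_wS_lead X_def Y_def right_diff_distrib sum_subtractf
        intro!: sum.cong)
  ultimately have "sumS m = (\<Sum>j\<le>m. X j - Y (Suc j))"
    by (simp add: sum_subtractf)
  also have "\<dots> = (-1)^m * (4*real m+1) * (\<Sum>j\<le>m. gosper_term m j)"
    unfolding sum_distrib_left
    by (rule sum.cong) (simp_all add: X_def Y_def wS_lead_gosper_term)
  also have "\<dots> = (if m = 0 then sqrt pi else 0)"
    by (cases "m = 0")
      (simp add: gosper_term_def gamma_half_quot_def gamma_half_0, simp add: sum_gosper_term_eq_0)
  finally show ?thesis .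
qed

lemma sumR_eq_pred:
  assumes "m \<ge> 1"
  shows "sumR m = -3 * sumR_pred m + 2 * sumS_pred m"
proof -
  have "sumR m = (\<Sum>j\<le>m. -3 * (gamma_half_quot (m+j) * wR (m+j-1) j) +
      2 * (gamma_half_quot (m+j) * wS (m+j-1) j))"
    unfolding sumR_def
  proof (rule sum.cong[OF refl])
    fix j
    have "m + j = Suc (m+j-1)" using assms by simp
    then have e: "wR (m+j) j = -3 * wR (m+j-1) j + 2 * wS (m+j-1) j"
      by (metis wR_Suc)
    show "gamma_half_quot (m+j) * wR (m+j) j = -3 * (gamma_half_quot (m+j) * wR (m+j-1) j) +
        2 * (gamma_half_quot (m+j) * wS (m+j-1) j)"
      unfolding e by (simp add: algebra_simps)
  qed
  also have "\<dots> = -3 * sumR_pred m + 2 * (\<Sum>j\<le>m. gamma_half_quot (m+j) * wS (m+j-1) j)"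
    unfolding sumR_pred_def by (simp only: sum.distrib sum_distrib_left)
  also have "(\<Sum>j\<le>m. gamma_half_quot (m+j) * wS (m+j-1) j) = sumS_pred m"
    unfolding sumS_pred_def using wS_eq_0[of "m + Suc m - 1" "Suc m"] assms by simp
  finally show ?thesis .
qed

lemma sumS_eq_pred:
  assumes "m \<ge> 1"
  shows "sumS m = -2 * sumR_pred m + sumS_pred m + 2 * sumR_pred (m+1)"
proof -
  have "sumS m = (\<Sum>j\<le>Suc m. -2 * (gamma_half_quot (m+j) * wR (m+j-1) j) +
      gamma_half_quot (m+j) * wS (m+j-1) j +
      2 * (if j = 0 then 0 else gamma_half_quot (m+j) * wR (m+j-1) (j-1)))"
    unfolding sumS_def
  proof (rule sum.cong)
    fix j
    have "m + j = Suc (m+j-1)" using assms by simp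
    then have e: "wS (m+j) j = -2 * wR (m+j-1) j + wS (m+j-1) j +
        (if j = 0 then 0 else 2 * wR (m+j-1) (j-1))"
      by (metis wS_Suc)
    show "gamma_half_quot (m+j) * wS (m+j) j = -2 * (gamma_half_quot (m+j) * wR (m+j-1) j) +
        gamma_half_quot (m+j) * wS (m+j-1) j +
        2 * (if j = 0 then 0 else gamma_half_quot (m+j) * wR (m+j-1) (j-1))"
      unfolding e by (simp add: algebra_simps)
  qed simp
  also have "\<dots> = -2 * (\<Sum>j\<le>Suc m. gamma_half_quot (m+j) * wR (m+j-1) j) + sumS_pred m
      + 2 * (\<Sum>j\<le>Suc m. if j = 0 then 0 else gamma_half_quot (m+j) * wR (m+j-1) (j-1))"
    unfolding sumS_pred_def by (simp only: sum.distrib sum_distrib_left Suc_eq_plus1)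
  also have "(\<Sum>j\<le>Suc m. gamma_half_quot (m+j) * wR (m+j-1) j) = sumR_pred m"
    unfolding sumR_pred_def using wR_eq_0[of "m + Suc m - 1" "Suc m"] assms by simp
  also have "(\<Sum>j\<le>Suc m. if j = 0 then 0 else gamma_half_quot (m+j) * wR (m+j-1) (j-1)) =
      (\<Sum>j\<le>m. gamma_half_quot (m+1+j) * wR (m+j) j)"
    by (simp only: sum.atMost_Suc_shift) simp
  also have "\<dots> = sumR_pred (m+1)"
    unfolding sumR_pred_def using wR_eq_0[of "m + 1 + Suc m - 1" "Suc m"] by simp
  finally show ?thesis .
qed

lemma sumR_pred_eq: "m \<ge> 1 \<Longrightarrow> sumR_pred m = 2 * sqrt pi / 4^m"
proof (induction m rule: dec_induct)
  case base
  have "wR 1 1 = 0"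
    by (simp add: wR_eq_0)
  then show ?case
    by (simp add: sumR_pred_def wR_0 gamma_half_quot_def gamma_half_Suc gamma_half_0)
next
  case (step m)
  then have "sumR_pred (m+1) = sumR_pred m / 4"
    using sumR_eq_pred[of m] sumS_eq_pred[of m] sumR_eq[of m] sumS_eq[of m] by simp
  with step show ?case by simp
qed

lemma sumS_pred_eq: "m \<ge> 1 \<Longrightarrow> sumS_pred m = 3 * sqrt pi / 4^m"
  using sumR_eq_pred[of m] sumR_eq[of m] sumR_pred_eq[of m] by simp

lemma brace_nat: "brace (int m) (int j) = gamma_half_quot (m+j) / gamma_half m"
proof -
  have "int m + int j = int (m+j)" by simp
  then show ?thesis
    by (simp only: brace_def gamma_half_quot_def gamma_half_def nat_int of_int_of_nat_eq) simp
qed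

lemma brace_shifted: "brace (int n + 1) (int j - 1) = gamma_half_quot (n+j) / gamma_half (Suc n)"
  using brace_nat[of "Suc n" "j - 1"]
  by (cases j) (simp_all add: brace_def gamma_half_quot_def gamma_half_def add_ac)

lemma alpha_eq_lincomb: "alpha m = (\<lambda>u. \<Sum>j\<le>m+1. brace (int m) (int j) * S (m+j) j u)"
  by (simp add: alpha_def atLeast0AtMost)

lemma Zsucc_eq_lincomb: "Zsucc n = (\<lambda>u. \<Sum>j\<le>n. brace (int n + 1) (int j - 1) * R (n+j) j u)"
  by (simp add: Zsucc_def atLeast0AtMost)

lemma nc_finite_alpha: "nc_finite (alpha m)"
  unfolding alpha_eq_lincomb by (rule nc_finite_lincomb) (simp_all add: nc_finite_S)

lemma nc_finite_Zsucc: "nc_finite (Zsucc n)"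
  unfolding Zsucc_eq_lincomb by (rule nc_finite_lincomb) (simp_all add: nc_finite_R)

lemma alpha_Nil: "alpha m [] = 0"
  by (simp add: alpha_eq_lincomb S_Nil)

lemma weight_alpha: "weight (alpha m) = (if m = 0 then 1 else 0)"
proof -
  have "weight (alpha m) = (\<Sum>j\<le>m+1. brace (int m) (int j) * wS (m+j) j)"
    unfolding alpha_eq_lincomb by (subst weight_lincomb) (simp_all add: nc_finite_S weight_S)
  also have "\<dots> = sumS m / gamma_half m"
    unfolding sumS_def sum_divide_distrib by (rule sum.cong) (simp_all add: brace_nat)
  finally  show ?thesis by (simp add: sumS_eq gamma_half_0)
qed

lemma weight_bar_alpha:
  "weight (nc_bar (alpha m)) = (if m = 0 then 1/2 else - 3 * sqrt pi / (2 * 4^m * gamma_half m))"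
proof -
  have "weight (nc_bar (alpha m)) = (\<Sum>j\<le>m+1. brace (int m) (int j) * wbarS (m+j) j)"
    unfolding alpha_eq_lincomb nc_bar_lincomb
    by (subst weight_lincomb) (simp_all add: nc_finite_bar nc_finite_S weight_bar_S)
  also have "\<dots> = (sumS m - sumS_pred m) / (2 * gamma_half m)"
    unfolding sumS_def sumS_pred_def sum_subtractf[symmetric] sum_divide_distrib
    by (rule sum.cong) (simp_all add: brace_nat wbarS_def field_simps)
  finally have "weight (nc_bar (alpha m)) = (sumS m - sumS_pred m) / (2 * gamma_half m)" .
  moreover have "sumS_pred 0 = 0"
    by (simp add: sumS_pred_def wS_0)
  ultimately show ?thesis
    by (simp add: sumS_eq sumS_pred_eq gamma_half_0)
qed

lemma weight_Zsucc: "weight (Zsucc n) = (if n = 0 then 2 else 0)"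
proof -
  have "weight (Zsucc n) = (\<Sum>j\<le>n. brace (int n + 1) (int j - 1) * wR (n+j) j)"
    unfolding Zsucc_eq_lincomb by (subst weight_lincomb) (simp_all add: nc_finite_R weight_R)
  also have "\<dots> = sumR n / gamma_half (Suc n)"
    unfolding sumR_def sum_divide_distrib by (rule sum.cong) (simp_all add: brace_shifted)
  finally show ?thesis by (simp add: sumR_eq gamma_half_Suc gamma_half_0)
qed

lemma weight_bar_Zsucc:
  "weight (nc_bar (Zsucc n)) = (if n = 0 then 0 else - sqrt pi / (4^n * gamma_half (Suc n)))"
proof -
  have "weight (nc_bar (Zsucc n)) = (\<Sum>j\<le>n. brace (int n + 1) (int j - 1) * wbarR (n+j) j)"
    unfolding Zsucc_eq_lincomb nc_bar_lincomb
    by (subst weight_lincomb) (simp_all add: nc_finite_bar nc_finite_R weight_bar_R)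
  also have "\<dots> = (sumR n - sumR_pred n) / (2 * gamma_half (Suc n))"
    unfolding sumR_def sumR_pred_def sum_subtractf[symmetric] sum_divide_distrib
    by (intro sum.cong refl) (unfold brace_shifted wbarR_def, simp add: field_simps)
  finally have "weight (nc_bar (Zsucc n)) = (sumR n - sumR_pred n) / (2 * gamma_half (Suc n))" .
  moreover have "sumR_pred 0 = sqrt pi"
    by (simp add: sumR_pred_def wR_0 gamma_half_quot_def gamma_half_0)
  ultimately show ?thesis
    by (simp add: sumR_eq sumR_pred_eq)
qed

declare Dop.simps [simp del]

lemma Dop_1: "Dop 1 = nc_smult (2 / sqrt pi) nc_one"
  by (subst Dop.simps) simp

definition alpha_convolution :: "(nat \<Rightarrow> real) \<Rightarrow> (nat \<Rightarrow> ncp) \<Rightarrow> nat \<Rightarrow> ncp" where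
  "alpha_convolution c A n = (\<lambda>u. \<Sum>i=1..n. c i * nc_mult (A i) (alpha (n-i)) u)"

lemma Dop_even:
  assumes "n \<ge> 1"
  shows "Dop (2*n) = alpha_convolution (\<lambda>i. gamma_half i * gamma_half (n-i) / (sqrt pi * fact n))
                        (\<lambda>i. Dop (2*i - 1)) n"
  using assms by (subst Dop.simps) (simp add: Let_def alpha_convolution_def gamma_half_def)

lemma Dop_odd:
  assumes "n \<ge> 1"
  shows "Dop (2*n+1) = nc_add (nc_smult (1 / sqrt pi) (Zsucc n))
           (alpha_convolution (\<lambda>i. fact i * gamma_half (n-i) / (sqrt pi * gamma_half (Suc n)))
              (\<lambda>i. Dop (2*i)) n)"
  using assms
  by (subst Dop.simps) (simp add: Let_def alpha_convolution_def nc_add_def nc_smult_def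
      gamma_half_def add_ac)

lemma weight_mult_alpha:
  "nc_finite A \<Longrightarrow> weight (nc_mult A (alpha m)) = (if m = 0 then weight A else 0)"
  by (simp add: weight_mult nc_finite_alpha weight_alpha)

lemma weight_bar_mult_alpha:
  "nc_finite A \<Longrightarrow> weight (nc_bar (nc_mult A (alpha m))) = weight A * weight (nc_bar (alpha m))"
  by (simp add: weight_bar_mult nc_finite_alpha alpha_Nil)

lemma nc_finite_alpha_convolution:
  "(\<And>i. i \<in> {1..n} \<Longrightarrow> nc_finite (A i)) \<Longrightarrow> nc_finite (alpha_convolution c A n)"
  unfolding alpha_convolution_def
  by (rule nc_finite_lincomb) (simp_all add: nc_finite_mult nc_finite_alpha)

lemma weight_alpha_convolution:
  assumes "n \<ge> 1" "\<And>i. i \<in> {1..n} \<Longrightarrow> nc_finite (A i)"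
  shows "weight (alpha_convolution c A n) = c n * weight (A n)"
proof -
  have "weight (alpha_convolution c A n) =
      (\<Sum>i=1..n. c i * weight (nc_mult (A i) (alpha (n-i))))"
    unfolding alpha_convolution_def using assms(2)
    by (subst weight_lincomb) (auto simp: nc_finite_mult nc_finite_alpha)
  also have "\<dots> = (\<Sum>i=1..n. if i = n then c n * weight (A n) else 0)"
    using assms(2) by (intro sum.cong refl) (auto simp: weight_mult_alpha)
  also have "\<dots> = c n * weight (A n)"
    using assms(1) by simp
  finally show ?thesis .
qed

lemma weight_bar_alpha_convolution:
  assumes "\<And>i. i \<in> {1..n} \<Longrightarrow> nc_finite (A i)"
  shows "weight (nc_bar (alpha_convolution c A n)) =
    (\<Sum>i=1..n. c i * weight (A i) * weight (nc_bar (alpha (n-i))))"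
  unfolding alpha_convolution_def nc_bar_lincomb using assms
  by (subst weight_lincomb) (auto simp: nc_finite_bar nc_finite_mult nc_finite_alpha
      weight_bar_mult_alpha mult.assoc intro!: sum.cong)

lemma weight_Dop_odd_step:
  assumes "n \<ge> 1"
    and even_below: "\<And>k. k \<in> {1..n} \<Longrightarrow>
      nc_finite (Dop (2*k)) \<and> weight (Dop (2*k)) = 1 / fact k"
  shows "nc_finite (Dop (2*n+1)) \<and> weight (Dop (2*n+1)) = 1 / gamma_half (Suc n)"
proof -
  define c where "c k = fact k * gamma_half (n-k) / (sqrt pi * gamma_half (Suc n))" for k
  define T where "T = alpha_convolution c (\<lambda>k. Dop (2*k)) n"
  have "nc_finite T"
    unfolding T_def by (rule nc_finite_alpha_convolution) (use even_below in blast)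
  moreover have "weight T = c n * weight (Dop (2*n))"
    unfolding T_def by (rule weight_alpha_convolution[OF assms(1)]) (use even_below in blast)
  ultimately show ?thesis
    unfolding Dop_odd[OF assms(1)] c_def[symmetric] T_def[symmetric]
    using assms even_below[of n] nc_finite_Zsucc[of n]
    by (simp add: nc_finite_add nc_finite_smult weight_add weight_smult weight_Zsucc c_def
        gamma_half_0)
qed

lemma weight_Dop_even_step:
  assumes "n \<ge> 1"
    and odd_upto: "\<And>k. k \<in> {1..n} \<Longrightarrow>
      nc_finite (Dop (2*k - 1)) \<and> weight (Dop (2*k - 1)) = 1 / gamma_half k"
  shows "nc_finite (Dop (2*n)) \<and> weight (Dop (2*n)) = 1 / fact n"
proof -
  define c where "c k = gamma_half k * gamma_half (n-k) / (sqrt pi * fact n)" for k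
  define T where "T = alpha_convolution c (\<lambda>k. Dop (2*k - 1)) n"
  have "nc_finite T"
    unfolding T_def by (rule nc_finite_alpha_convolution) (use odd_upto in blast)
  moreover have "weight T = c n * weight (Dop (2*n - 1))"
    unfolding T_def by (rule weight_alpha_convolution[OF assms(1)]) (use odd_upto in blast)
  ultimately show ?thesis
    unfolding Dop_even[OF assms(1)] c_def[symmetric] T_def[symmetric]
    using assms odd_upto[of n] gamma_half_pos[of n] by (simp add: c_def gamma_half_0)
qed

lemma weight_Dop:
  assumes "i \<ge> 1"
  shows "nc_finite (Dop (2*i - 1)) \<and> weight (Dop (2*i - 1)) = 1 / gamma_half i \<and>
         nc_finite (Dop (2*i)) \<and> weight (Dop (2*i)) = 1 / fact i"
  using assms
proof (induction i rule: less_induct)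
  case (less i)
  have odd: "nc_finite (Dop (2*i - 1)) \<and> weight (Dop (2*i - 1)) = 1 / gamma_half i"
  proof (cases "i = 1")
    case True
    have "Dop (2*i - 1) = Dop 1" using True by simp
    then show ?thesis
      using True unfolding Dop_1
      by (simp add: nc_finite_smult nc_finite_one weight_smult weight_one gamma_half_Suc gamma_half_0)
  next
    case False
    define n where "n = i - 1"
    have n: "i = Suc n" "n \<ge> 1"
      using less.prems False by (simp_all add: n_def)
    then have "2*i - 1 = 2*n + 1" by simp
    then show ?thesis
      using weight_Dop_odd_step[OF n(2)] less.IH n by simp
  qed
  have "nc_finite (Dop (2*k - 1)) \<and> weight (Dop (2*k - 1)) = 1 / gamma_half k"
    if "k \<in> {1..i}" for k
    using less.IH[of k] that odd by (cases "k = i") auto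
  then have "nc_finite (Dop (2*i)) \<and> weight (Dop (2*i)) = 1 / fact i"
    by (rule weight_Dop_even_step[OF less.prems])
  with odd show ?case by blast
qed

lemma nc_finite_Dop_odd: "i \<ge> 1 \<Longrightarrow> nc_finite (Dop (2*i - 1))"
  and weight_Dop_odd: "i \<ge> 1 \<Longrightarrow> weight (Dop (2*i - 1)) = 1 / gamma_half i"
  and nc_finite_Dop_even: "i \<ge> 1 \<Longrightarrow> nc_finite (Dop (2*i))"
  and weight_Dop_even: "i \<ge> 1 \<Longrightarrow> weight (Dop (2*i)) = 1 / fact i"
  using weight_Dop by blast+

lemma sum_weight_bar_alpha:
  "n \<ge> 1 \<Longrightarrow> (\<Sum>m<n. gamma_half m * weight (nc_bar (alpha m))) = 2 * sqrt pi / 4^n"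
proof (induction n rule: dec_induct)
  case base
  then show ?case by (simp add: weight_bar_alpha gamma_half_0)
next
  case (step n)
  then show ?case
    using gamma_half_pos[of n] by (simp add: weight_bar_alpha field_simps)
qed

lemma sum_atLeast1_atMost_reflect: "(\<Sum>i=1..n. f (n - i)) = (\<Sum>m<n. f m)"
  for f :: "nat \<Rightarrow> 'a::comm_monoid_add"
proof -
  have "(\<Sum>i=1..n. f (n - i)) = (\<Sum>k<n. f (n - Suc k))"
    using sum.atLeast1_atMost_eq[of "\<lambda>i. f (n - i)" n] by simp
  also have "\<dots> = (\<Sum>m<n. f m)"
    by (rule sum.nat_diff_reindex)
  finally show ?thesis .
qed

lemma weight_bar_Dop_even:
  assumes "n \<ge> 1"
  shows "weight (nc_bar (Dop (2*n))) = 2 / (4^n * fact n)"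
proof -
  have "weight (nc_bar (Dop (2*n))) = (\<Sum>i=1..n. gamma_half i * gamma_half (n-i) / (sqrt pi * fact n)
      * weight (Dop (2*i - 1)) * weight (nc_bar (alpha (n-i))))"
    unfolding Dop_even[OF assms]
    by (rule weight_bar_alpha_convolution) (use nc_finite_Dop_odd in auto)
  also have "\<dots> = (\<Sum>i=1..n. gamma_half (n-i) * weight (nc_bar (alpha (n-i))) / (sqrt pi * fact n))"
  proof (rule sum.cong[OF refl])
    fix i assume "i \<in> {1..n}"
    then have "weight (Dop (2*i - 1)) = 1 / gamma_half i"
      by (intro weight_Dop_odd) simp
    then show "gamma_half i * gamma_half (n-i) / (sqrt pi * fact n) * weight (Dop (2*i - 1))
        * weight (nc_bar (alpha (n-i))) =
      gamma_half (n-i) * weight (nc_bar (alpha (n-i))) / (sqrt pi * fact n)"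
      using gamma_half_pos[of i] by simp
  qed
  also have "\<dots> = (\<Sum>m<n. gamma_half m * weight (nc_bar (alpha m))) / (sqrt pi * fact n)"
    using sum_atLeast1_atMost_reflect[of "\<lambda>m. gamma_half m * weight (nc_bar (alpha m))
        / (sqrt pi * fact n)" n]
    by (simp add: sum_divide_distrib)
  also have "\<dots> = 2 / (4^n * fact n)"
    using assms by (simp add: sum_weight_bar_alpha)
  finally show ?thesis .
qed

lemma weight_bar_Dop_odd:
  assumes "n \<ge> 1"
  shows "weight (nc_bar (Dop (2*n+1))) = 1 / (4^n * gamma_half (Suc n))"
proof -
  define c where "c i = fact i * gamma_half (n-i) / (sqrt pi * gamma_half (Suc n))" for i
  define T where "T = alpha_convolution c (\<lambda>i. Dop (2*i)) n"
  have T: "nc_finite (nc_bar T)"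
    unfolding T_def by (intro nc_finite_bar nc_finite_alpha_convolution) (simp add: nc_finite_Dop_even)
  have "weight (nc_bar T) = (\<Sum>i=1..n. c i * weight (Dop (2*i)) * weight (nc_bar (alpha (n-i))))"
    unfolding T_def by (rule weight_bar_alpha_convolution) (simp add: nc_finite_Dop_even)
  also have "\<dots> = (\<Sum>i=1..n. gamma_half (n-i) * weight (nc_bar (alpha (n-i)))
      / (sqrt pi * gamma_half (Suc n)))"
    by (rule sum.cong[OF refl]) (simp add: c_def weight_Dop_even)
  also have "\<dots> = (\<Sum>m<n. gamma_half m * weight (nc_bar (alpha m))) / (sqrt pi * gamma_half (Suc n))"
    using sum_atLeast1_atMost_reflect[of "\<lambda>m. gamma_half m * weight (nc_bar (alpha m))
        / (sqrt pi * gamma_half (Suc n))" n]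
    by (simp add: sum_divide_distrib)
  finally have "weight (nc_bar T) = 2 / (4^n * gamma_half (Suc n))"
    using assms gamma_half_pos[of "Suc n"] by (simp add: sum_weight_bar_alpha)
  moreover have "Dop (2*n+1) = nc_add (nc_smult (1 / sqrt pi) (Zsucc n)) T"
    unfolding Dop_odd[OF assms] T_def c_def ..
  ultimately show ?thesis
    using assms T by (simp add: nc_bar_add nc_bar_smult weight_add weight_smult nc_finite_smult
        nc_finite_bar nc_finite_Zsucc weight_bar_Zsucc field_simps)
qed

theorem theorem4p3:
  shows "(\<forall>n::nat. n \<ge> 1 \<longrightarrow>
            weight (nc_bar (Dop (2 * n))) = 2 / (4 ^ n * fact n) \<and>
            weight (nc_bar (Dop (2 * n + 1))) =
              (1 / sqrt pi) * (1 / (2 ^ (n - 1) * real (dfact (2 * n + 1)))))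
         \<and> (\<forall>k::nat. k \<ge> 2 \<longrightarrow> weight (nc_bar (Dop k)) \<noteq> 0)"
proof (intro conjI allI impI)
  fix n :: nat
  assume n: "n \<ge> 1"
  show "weight (nc_bar (Dop (2 * n))) = 2 / (4 ^ n * fact n)"
    using weight_bar_Dop_even[OF n] .
  have "(4::real)^n = 2^(n - 1 + Suc n)"
    using n by (simp add: power_mult flip: mult_2)
  then have "(4::real)^n = 2^(n-1) * 2^(Suc n)"
    by (simp only: power_add)
  then show "weight (nc_bar (Dop (2 * n + 1))) =
      (1 / sqrt pi) * (1 / (2 ^ (n - 1) * real (dfact (2 * n + 1))))"
    using weight_bar_Dop_odd[OF n] gamma_half_double_fact[of n] by (simp add: mult_ac)
next
  fix k :: nat
  assume "k \<ge> 2"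
  moreover define n where "n = k div 2"
  ultimately have "n \<ge> 1" "k = 2*n \<or> k = 2*n + 1"
    by presburger+
  then show "weight (nc_bar (Dop k)) \<noteq> 0"
    using weight_bar_Dop_even[of n] weight_bar_Dop_odd[of n] gamma_half_pos[of "Suc n"] by auto
qed

end
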